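(* The following two statements are equivalent: (i) For every finite simple undirected graph $G$, the complete graph $K_{\chi(G)}$ is a minor of $G$. (ii) For every finite simple undirected graph $G$ that is not complete, there is a minor $M$ of $G$ such that $M \not\cong G$ and there is a graph homomorphism $G \to M$.
   Context: Graphs are simple and undirected: $G=(V,E)$ with $E \subseteq \{\{x,y\}: x,y\in V,\ x\neq y\}$. $\chi(G)$ denotes the chromatic number of $G$, i.e. the least cardinal $\lambda$ such that there is a graph homomorphism $G \to K_\lambda$; $K_\alpha$ is the complete graph on $\alpha$ vertices. Disjoint sets $S,T\subseteq V(G)$ are connected to each other if there are $s\in S$, $t\in T$ with $\{s,t\}\in E(G)$. For a collection $\mathcal D$ of pairwise disjoint, nonempty subsets of $V(G)$, each inducing a connected subgraph, let $G(\mathcal D)$ be the graph with vertex set $\mathcal D$ in which distinct $d,e\in\mathcal D$ are adjacent iff $d$ and $e$ are connected to each other. A graph $M$ is a minor of $G$ if there is such a collection $\mathcal D$ and an injective graph homomorphism $M \to G(\mathcal D)$. *)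

theory Defs
  imports Main
begin

definition simple_graph :: "'a set \<Rightarrow> 'a set set \<Rightarrow> bool" where
  "simple_graph V E \<longleftrightarrow> E \<subseteq> {{x, y} | x y. x \<in> V \<and> y \<in> V \<and> x \<noteq> y}"

definition finite_graph :: "'a set \<Rightarrow> 'a set set \<Rightarrow> bool" where
  "finite_graph V E \<longleftrightarrow> simple_graph V E \<and> finite V"

definition graph_hom :: "'a set \<Rightarrow> 'a set set \<Rightarrow> 'b set \<Rightarrow> 'b set set \<Rightarrow> ('a \<Rightarrow> 'b) \<Rightarrow> bool" where
  "graph_hom V E V' E' f \<longleftrightarrow> f ` V \<subseteq> V' \<and> (\<forall>x y. {x, y} \<in> E \<longrightarrow> {f x, f y} \<in> E')"

definition graph_iso :: "'a set \<Rightarrow> 'a set set \<Rightarrow> 'b set \<Rightarrow> 'b set set \<Rightarrow> bool" where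
  "graph_iso V E V' E' \<longleftrightarrow> (\<exists>f. bij_betw f V V' \<and>
      (\<forall>x\<in>V. \<forall>y\<in>V. {x, y} \<in> E \<longleftrightarrow> {f x, f y} \<in> E'))"

definition K_verts :: "nat \<Rightarrow> nat set" where
  "K_verts n = {..<n}"

definition K_edges :: "nat \<Rightarrow> nat set set" where
  "K_edges n = {{x, y} | x y. x < n \<and> y < n \<and> x \<noteq> y}"

definition complete_graph :: "'a set \<Rightarrow> 'a set set \<Rightarrow> bool" where
  "complete_graph V E \<longleftrightarrow> (\<forall>x\<in>V. \<forall>y\<in>V. x \<noteq> y \<longrightarrow> {x, y} \<in> E)"

definition chromatic_number :: "'a set \<Rightarrow> 'a set set \<Rightarrow> nat" where
  "chromatic_number V E = (LEAST n. \<exists>f. graph_hom V E (K_verts n) (K_edges n) f)"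

definition induces_connected :: "'a set set \<Rightarrow> 'a set \<Rightarrow> bool" where
  "induces_connected E S \<longleftrightarrow>
     (\<forall>x\<in>S. \<forall>y\<in>S. (x, y) \<in> {(u, v). u \<in> S \<and> v \<in> S \<and> {u, v} \<in> E}\<^sup>*)"

definition connected_to :: "'a set set \<Rightarrow> 'a set \<Rightarrow> 'a set \<Rightarrow> bool" where
  "connected_to E S T \<longleftrightarrow> (\<exists>s\<in>S. \<exists>t\<in>T. {s, t} \<in> E)"

definition branch_sets :: "'a set \<Rightarrow> 'a set set \<Rightarrow> 'a set set \<Rightarrow> bool" where
  "branch_sets V E D \<longleftrightarrow>
     (\<forall>d\<in>D. d \<noteq> {} \<and> d \<subseteq> V \<and> induces_connected E d) \<and>
     (\<forall>d\<in>D. \<forall>e\<in>D. d \<noteq> e \<longrightarrow> d \<inter> e = {})"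

definition contr_edges :: "'a set set \<Rightarrow> 'a set set \<Rightarrow> 'a set set set" where
  "contr_edges E D = {{d, e} | d e. d \<in> D \<and> e \<in> D \<and> d \<noteq> e \<and> connected_to E d e}"

definition is_minor :: "'b set \<Rightarrow> 'b set set \<Rightarrow> 'a set \<Rightarrow> 'a set set \<Rightarrow> bool" where
  "is_minor VM EM V E \<longleftrightarrow> (\<exists>D f. branch_sets V E D \<and>
       graph_hom VM EM D (contr_edges E D) f \<and> inj_on f VM)"

end

theory Submission
  imports Defs
begin

text \<open>
  A homomorphism \<open>G \<rightarrow> M\<close> gives \<open>\<chi>(G) \<le> \<chi>(M)\<close>, and a minor of \<open>G\<close> that is not
  isomorphic to \<open>G\<close> has strictly fewer vertices plus edges: its vertices and edges inject
  into those of \<open>G\<close>, and equality of both counts forces all branch sets to be singletons.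
  Given (i), a non-complete \<open>G\<close> has \<open>\<chi>(G) < |V(G)|\<close>, so the complete minor on \<open>\<chi>(G)\<close>
  vertices is the required \<open>M\<close>. Given (ii), induct on \<open>|V| + |E|\<close>: a complete graph is its
  own complete minor; otherwise the smaller minor \<open>M\<close> from (ii) has a complete minor on
  \<open>\<chi>(M) \<ge> \<chi>(G)\<close> vertices, which is also a minor of \<open>G\<close>.
\<close>

lemma simple_graph_edgeD:
  "simple_graph V E \<Longrightarrow> {x, y} \<in> E \<Longrightarrow> x \<in> V \<and> y \<in> V \<and> x \<noteq> y"
  unfolding simple_graph_def by (auto simp: doubleton_eq_iff)

lemma simple_graph_edgeE:
  assumes "simple_graph V E" "e \<in> E"
  obtains x y where "e = {x, y}" "x \<in> V" "y \<in> V" "x \<noteq> y"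
  using assms unfolding simple_graph_def by blast

lemma simple_graph_edges_subset_Pow: "simple_graph V E \<Longrightarrow> E \<subseteq> Pow V"
  unfolding simple_graph_def by blast

lemma finite_graph_finite_edges: "finite_graph V E \<Longrightarrow> finite E"
  unfolding finite_graph_def using simple_graph_edges_subset_Pow finite_subset by blast

lemma K_edges_iff: "{i, j} \<in> K_edges n \<longleftrightarrow> i < n \<and> j < n \<and> i \<noteq> j"
  by (auto simp: K_edges_def doubleton_eq_iff)

lemma simple_graph_K: "simple_graph (K_verts n) (K_edges n)"
  unfolding simple_graph_def K_verts_def K_edges_def by blast

lemma connected_to_commute: "connected_to E d e \<longleftrightarrow> connected_to E e d"
  unfolding connected_to_def by (metis insert_commute)

lemma contr_edges_iff:
  "{d, e} \<in> contr_edges E D \<longleftrightarrow> d \<in> D \<and> e \<in> D \<and> d \<noteq> e \<and> connected_to E d e"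
  unfolding contr_edges_def by (auto simp: doubleton_eq_iff connected_to_commute)

lemma graph_hom_contr_edges_connected_to:
  "graph_hom VM EM D (contr_edges E D) f \<Longrightarrow> {u, v} \<in> EM \<Longrightarrow> connected_to E (f u) (f v)"
  unfolding graph_hom_def by (simp add: contr_edges_iff)

lemma graph_hom_comp:
  "graph_hom V E V' E' f \<Longrightarrow> graph_hom V' E' V'' E'' g \<Longrightarrow> graph_hom V E V'' E'' (g \<circ> f)"
  unfolding graph_hom_def by (auto simp: image_subset_iff)

lemma graph_iso_card_eq: "graph_iso VM EM V E \<Longrightarrow> card VM = card V"
  unfolding graph_iso_def using bij_betw_same_card by blast

lemma ex_hom_K_of_colouring:
  assumes "simple_graph V E" "finite C" "c ` V \<subseteq> C"
    and proper: "\<And>x y. {x, y} \<in> E \<Longrightarrow> c x \<noteq> c y"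
  shows "\<exists>f. graph_hom V E (K_verts (card C)) (K_edges (card C)) f"
proof -
  obtain g where g: "bij_betw g C {0..<card C}"
    using ex_bij_betw_finite_nat[OF \<open>finite C\<close>] by blast
  have "graph_hom V E (K_verts (card C)) (K_edges (card C)) (g \<circ> c)"
    unfolding graph_hom_def
  proof (intro conjI allI impI)
    show "(g \<circ> c) ` V \<subseteq> K_verts (card C)"
      using g \<open>c ` V \<subseteq> C\<close> unfolding bij_betw_def K_verts_def by fastforce
  next
    fix x y assume "{x, y} \<in> E"
    then have "c x \<in> C" "c y \<in> C" "c x \<noteq> c y"
      using simple_graph_edgeD[OF \<open>simple_graph V E\<close>] proper \<open>c ` V \<subseteq> C\<close> by blast+
    then show "{(g \<circ> c) x, (g \<circ> c) y} \<in> K_edges (card C)"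
      using g unfolding bij_betw_def inj_on_def by (auto simp: K_edges_iff)
  qed
  then show ?thesis by blast
qed

lemma chromatic_number_le: "graph_hom V E (K_verts n) (K_edges n) f \<Longrightarrow> chromatic_number V E \<le> n"
  unfolding chromatic_number_def by (rule Least_le) blast

lemma ex_hom_K_card: "finite_graph V E \<Longrightarrow> \<exists>f. graph_hom V E (K_verts (card V)) (K_edges (card V)) f"
  unfolding finite_graph_def
  using ex_hom_K_of_colouring[where c = id and C = V] simple_graph_edgeD by fastforce

lemma chromatic_number_le_card: "finite_graph V E \<Longrightarrow> chromatic_number V E \<le> card V"
  using ex_hom_K_card chromatic_number_le by blast

lemma ex_hom_K_chromatic_number:
  assumes "finite_graph V E"
  shows "\<exists>f. graph_hom V E (K_verts (chromatic_number V E)) (K_edges (chromatic_number V E)) f"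
  using ex_hom_K_card[OF assms] LeastI_ex[of "\<lambda>n. \<exists>f. graph_hom V E (K_verts n) (K_edges n) f"]
  unfolding chromatic_number_def by blast

lemma chromatic_number_mono_hom:
  assumes "finite_graph VM EM" "graph_hom V E VM EM f"
  shows "chromatic_number V E \<le> chromatic_number VM EM"
  using ex_hom_K_chromatic_number[OF assms(1)] graph_hom_comp[OF assms(2)] chromatic_number_le
  by blast

text \<open>Identifying the two ends of a non-edge is a proper colouring with \<open>|V| - 1\<close> colours.\<close>

lemma chromatic_number_less_card:
  assumes "finite_graph V E" "\<not> complete_graph V E"
  shows "chromatic_number V E < card V"
proof -
  have "finite V" and sg: "simple_graph V E"
    using assms(1) unfolding finite_graph_def by auto
  obtain x y where xy: "x \<in> V" "y \<in> V" "x \<noteq> y" "{x, y} \<notin> E"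
    using assms(2) unfolding complete_graph_def by blast
  define c where "c v = (if v = y then x else v)" for v
  have "c ` V \<subseteq> V - {y}"
    using xy unfolding c_def by auto
  moreover have "c u \<noteq> c v" if uv: "{u, v} \<in> E" for u v
  proof
    assume "c u = c v"
    moreover have "u \<noteq> v" using simple_graph_edgeD[OF sg uv] by blast
    ultimately have "{u, v} = {x, y}"
      unfolding c_def by (auto split: if_splits)
    then show False using uv xy by simp
  qed
  ultimately obtain f where "graph_hom V E (K_verts (card (V - {y}))) (K_edges (card (V - {y}))) f"
    using ex_hom_K_of_colouring[OF sg, of "V - {y}" c] \<open>finite V\<close> by blast
  then have "chromatic_number V E \<le> card (V - {y})"
    by (rule chromatic_number_le)
  also have "\<dots> = card V - 1"
    using \<open>y \<in> V\<close> by simp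
  finally have "chromatic_number V E \<le> card V - 1" .
  moreover have "card V \<noteq> 0" using \<open>finite V\<close> xy by auto
  ultimately show ?thesis by linarith
qed

lemma is_minor_subgraph:
  assumes "is_minor VM EM V E" "VM' \<subseteq> VM" "EM' \<subseteq> EM"
  shows "is_minor VM' EM' V E"
  using assms unfolding is_minor_def graph_hom_def by (meson image_mono inj_on_subset order_trans subsetD)

lemma is_minor_K_mono:
  assumes "k \<le> m" "is_minor (K_verts m) (K_edges m) V E"
  shows "is_minor (K_verts k) (K_edges k) V E"
proof (rule is_minor_subgraph[OF assms(2)])
  show "K_verts k \<subseteq> K_verts m" using assms(1) by (auto simp: K_verts_def)
  show "K_edges k \<subseteq> K_edges m" using assms(1) unfolding K_edges_def by fastforce
qed

lemma is_minor_of_inj_hom: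
  assumes "simple_graph VM EM" "graph_hom VM EM V E g" "inj_on g VM"
  shows "is_minor VM EM V E"
proof -
  define D where "D = (\<lambda>v. {v}) ` V"
  have "branch_sets V E D"
    unfolding branch_sets_def D_def induces_connected_def by auto
  moreover have "graph_hom VM EM D (contr_edges E D) (\<lambda>v. {g v})"
    using assms simple_graph_edgeD[OF assms(1)] unfolding graph_hom_def D_def inj_on_def
    by (auto simp: contr_edges_iff connected_to_def image_subset_iff)
  moreover have "inj_on (\<lambda>v. {g v}) VM"
    using assms(3) unfolding inj_on_def by blast
  ultimately show ?thesis unfolding is_minor_def by blast
qed

lemma complete_graph_K_card_minor:
  assumes "finite V" "complete_graph V E"
  shows "is_minor (K_verts (card V)) (K_edges (card V)) V E"
proof -
  obtain g where g: "bij_betw g {0..<card V} V"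
    using ex_bij_betw_nat_finite[OF assms(1)] by blast
  have "inj_on g (K_verts (card V))"
    using g unfolding bij_betw_def K_verts_def by (simp add: atLeast0LessThan)
  moreover have "graph_hom (K_verts (card V)) (K_edges (card V)) V E g"
    unfolding graph_hom_def
  proof (intro conjI allI impI)
    show "g ` K_verts (card V) \<subseteq> V"
      using g unfolding bij_betw_def K_verts_def by (simp add: atLeast0LessThan)
  next
    fix i j assume "{i, j} \<in> K_edges (card V)"
    then have "g i \<in> V" "g j \<in> V" "g i \<noteq> g j"
      using g \<open>inj_on g (K_verts (card V))\<close>
      unfolding bij_betw_def inj_on_def K_verts_def by (auto simp: K_edges_iff atLeast0LessThan)
    then show "{g i, g j} \<in> E"
      using assms(2) unfolding complete_graph_def by blast
  qed
  ultimately show ?thesis by (intro is_minor_of_inj_hom simple_graph_K)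
qed

lemma induces_connected_UN:
  assumes conn: "induces_connected F d"
    and parts: "\<And>u. u \<in> d \<Longrightarrow> induces_connected E (g u)"
    and links: "\<And>u v. u \<in> d \<Longrightarrow> v \<in> d \<Longrightarrow> {u, v} \<in> F \<Longrightarrow> connected_to E (g u) (g v)"
  shows "induces_connected E (\<Union>u\<in>d. g u)"
proof -
  let ?R = "{(x, y). x \<in> (\<Union>u\<in>d. g u) \<and> y \<in> (\<Union>u\<in>d. g u) \<and> {x, y} \<in> E}"
  have inside: "(x, y) \<in> ?R\<^sup>*" if "u \<in> d" "x \<in> g u" "y \<in> g u" for u x y
  proof -
    have "(x, y) \<in> {(a, b). a \<in> g u \<and> b \<in> g u \<and> {a, b} \<in> E}\<^sup>*"
      using parts[OF \<open>u \<in> d\<close>] that(2,3) unfolding induces_connected_def by blast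
    moreover have "{(a, b). a \<in> g u \<and> b \<in> g u \<and> {a, b} \<in> E} \<subseteq> ?R"
      using \<open>u \<in> d\<close> by blast
    ultimately show ?thesis using rtrancl_mono by blast
  qed
  have along: "\<forall>x\<in>g u. \<forall>y\<in>g v. (x, y) \<in> ?R\<^sup>*"
    if "(u, v) \<in> {(a, b). a \<in> d \<and> b \<in> d \<and> {a, b} \<in> F}\<^sup>*" "u \<in> d" for u v
    using that(1)
  proof (induction rule: rtrancl_induct)
    case base
    show ?case using inside \<open>u \<in> d\<close> by blast
  next
    case (step v w)
    then have "v \<in> d" "w \<in> d" "{v, w} \<in> F" by auto
    then obtain s t where st: "s \<in> g v" "t \<in> g w" "{s, t} \<in> E"
      using links unfolding connected_to_def by blast
    show ?case
    proof (intro ballI)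
      fix x y assume "x \<in> g u" "y \<in> g w"
      have "(x, s) \<in> ?R\<^sup>*" using step.IH \<open>x \<in> g u\<close> st(1) by blast
      moreover have "(s, t) \<in> ?R" using st \<open>v \<in> d\<close> \<open>w \<in> d\<close> by blast
      moreover have "(t, y) \<in> ?R\<^sup>*" using inside \<open>w \<in> d\<close> st(2) \<open>y \<in> g w\<close> by blast
      ultimately show "(x, y) \<in> ?R\<^sup>*" by (meson rtrancl_into_rtrancl rtrancl_trans)
    qed
  qed
  show ?thesis
    using conn along unfolding induces_connected_def by blast
qed

lemma branch_setsD:
  "branch_sets V E D \<Longrightarrow> d \<in> D \<Longrightarrow> d \<noteq> {} \<and> d \<subseteq> V \<and> induces_connected E d"
  unfolding branch_sets_def by blast

lemma branch_sets_disjoint: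
  "branch_sets V E D \<Longrightarrow> d \<in> D \<Longrightarrow> e \<in> D \<Longrightarrow> d \<noteq> e \<Longrightarrow> d \<inter> e = {}"
  unfolding branch_sets_def by blast

lemma connected_to_UN:
  assumes "connected_to F d e" "\<And>u v. {u, v} \<in> F \<Longrightarrow> connected_to E (g u) (g v)"
  shows "connected_to E (\<Union>u\<in>d. g u) (\<Union>v\<in>e. g v)"
proof -
  obtain u v where "u \<in> d" "v \<in> e" "{u, v} \<in> F"
    using assms(1) unfolding connected_to_def by blast
  moreover obtain s t where "s \<in> g u" "t \<in> g v" "{s, t} \<in> E"
    using assms(2)[OF \<open>{u, v} \<in> F\<close>] unfolding connected_to_def by blast
  ultimately show ?thesis unfolding connected_to_def by blast
qed

lemma branch_sets_UN:
  assumes bs1: "branch_sets V E D1" and h1: "graph_hom VM EM D1 (contr_edges E D1) f1"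
    and i1: "inj_on f1 VM" and bs2: "branch_sets VM EM D2"
  shows "branch_sets V E ((\<lambda>d. \<Union>u\<in>d. f1 u) ` D2)" and "inj_on (\<lambda>d. \<Union>u\<in>d. f1 u) D2"
proof -
  define F where "F d = (\<Union>u\<in>d. f1 u)" for d
  have f1_D1: "f1 u \<in> D1" if "u \<in> VM" for u
    using h1 that unfolding graph_hom_def by blast
  have f1_props: "f1 u \<noteq> {}" "f1 u \<subseteq> V" "induces_connected E (f1 u)" if "u \<in> VM" for u
    using branch_setsD[OF bs1 f1_D1[OF that]] by blast+
  have F_nonempty: "F d \<noteq> {}" and F_subset: "F d \<subseteq> V" if d: "d \<in> D2" for d
  proof -
    have "d \<noteq> {}" "d \<subseteq> VM" using branch_setsD[OF bs2 d] by blast+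
    then show "F d \<noteq> {}" using f1_props(1) unfolding F_def by fastforce
    show "F d \<subseteq> V" using \<open>d \<subseteq> VM\<close> f1_props(2) unfolding F_def by blast
  qed
  have F_disjoint: "F d \<inter> F e = {}" if "d \<in> D2" "e \<in> D2" "d \<noteq> e" for d e
  proof -
    have "f1 u \<inter> f1 v = {}" if "u \<in> d" "v \<in> e" for u v
    proof (rule branch_sets_disjoint[OF bs1])
      have "u \<in> VM" "v \<in> VM" "u \<noteq> v"
        using branch_setsD[OF bs2] branch_sets_disjoint[OF bs2] \<open>d \<in> D2\<close> \<open>e \<in> D2\<close> \<open>d \<noteq> e\<close> that
        by blast+
      then show "f1 u \<in> D1" "f1 v \<in> D1" "f1 u \<noteq> f1 v"
        using f1_D1 inj_onD[OF i1] by blast+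
    qed
    then show ?thesis unfolding F_def by blast
  qed
  have F_connected: "induces_connected E (F d)" if d: "d \<in> D2" for d
    unfolding F_def
  proof (rule induces_connected_UN)
    show "induces_connected EM d" using branch_setsD[OF bs2 d] by blast
    show "induces_connected E (f1 u)" if "u \<in> d" for u
      using branch_setsD[OF bs2 d] f1_props(3) that by blast
  qed (rule graph_hom_contr_edges_connected_to[OF h1])
  show "branch_sets V E ((\<lambda>d. \<Union>u\<in>d. f1 u) ` D2)"
    unfolding branch_sets_def F_def[symmetric] using F_nonempty F_subset F_connected F_disjoint by blast
  show "inj_on (\<lambda>d. \<Union>u\<in>d. f1 u) D2"
    unfolding F_def[symmetric] using F_disjoint F_nonempty by (metis Int_absorb inj_onI)
qed

lemma is_minor_trans:
  assumes "is_minor A B VM EM" "is_minor VM EM V E"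
  shows "is_minor A B V E"
proof -
  obtain D1 f1 where bs1: "branch_sets V E D1" and h1: "graph_hom VM EM D1 (contr_edges E D1) f1"
    and i1: "inj_on f1 VM"
    using assms(2) unfolding is_minor_def by blast
  obtain D2 f2 where bs2: "branch_sets VM EM D2" and h2: "graph_hom A B D2 (contr_edges EM D2) f2"
    and i2: "inj_on f2 A"
    using assms(1) unfolding is_minor_def by blast
  define F where "F d = (\<Union>u\<in>d. f1 u)" for d
  note merged = branch_sets_UN[OF bs1 h1 i1 bs2, folded F_def]
  have "graph_hom A B (F ` D2) (contr_edges E (F ` D2)) (F \<circ> f2)"
    unfolding graph_hom_def
  proof (intro conjI allI impI)
    show "(F \<circ> f2) ` A \<subseteq> F ` D2" using h2 unfolding graph_hom_def by auto
  next
    fix a b assume "{a, b} \<in> B"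
    then have "f2 a \<in> D2" "f2 b \<in> D2" "f2 a \<noteq> f2 b" "connected_to EM (f2 a) (f2 b)"
      using h2 unfolding graph_hom_def by (simp_all add: contr_edges_iff)
    moreover have "F (f2 a) \<noteq> F (f2 b)"
      using calculation inj_onD[OF merged(2)] by blast
    moreover have "connected_to E (F (f2 a)) (F (f2 b))"
      unfolding F_def using \<open>connected_to EM (f2 a) (f2 b)\<close>
      by (rule connected_to_UN) (rule graph_hom_contr_edges_connected_to[OF h1])
    ultimately show "{(F \<circ> f2) a, (F \<circ> f2) b} \<in> contr_edges E (F ` D2)"
      by (simp add: contr_edges_iff)
  qed
  moreover have "inj_on (F \<circ> f2) A"
    using comp_inj_on[OF i2 inj_on_subset[OF merged(2)]] h2 unfolding graph_hom_def by blast
  ultimately show ?thesis using merged(1) unfolding is_minor_def by blast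
qed

lemma branch_sets_member_unique:
  assumes "branch_sets V E D" "f ` VM \<subseteq> D" "inj_on f VM"
    and "u \<in> VM" "v \<in> VM" "z \<in> f u" "z \<in> f v"
  shows "u = v"
proof (rule inj_onD[OF assms(3) _ assms(4,5)], rule ccontr)
  assume "f u \<noteq> f v"
  then have "f u \<inter> f v = {}"
    using branch_sets_disjoint[OF assms(1)] assms(2,4,5) by blast
  then show False using assms(6,7) by blast
qed

lemma branch_set_representatives:
  assumes "branch_sets V E D" "f ` VM \<subseteq> D" "inj_on f VM"
  obtains h where "inj_on h VM" "h ` VM \<subseteq> V" "\<And>v. v \<in> VM \<Longrightarrow> h v \<in> f v"
proof -
  have "\<forall>v\<in>VM. \<exists>x. x \<in> f v"
    using branch_setsD[OF assms(1)] assms(2) by blast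
  then obtain h where h: "\<And>v. v \<in> VM \<Longrightarrow> h v \<in> f v"
    by metis
  moreover have "inj_on h VM"
    using branch_sets_member_unique[OF assms] h by (metis inj_onI)
  moreover have "h ` VM \<subseteq> V"
    using branch_setsD[OF assms(1)] assms(2) h by blast
  ultimately show ?thesis using that by blast
qed

text \<open>Each edge of the minor is witnessed by an edge of the host graph joining the two
  branch sets, and the witness determines the edge back as the set of vertices whose
  branch sets it meets.\<close>

lemma minor_card_edges_le:
  assumes "finite E" "simple_graph VM EM" "branch_sets V E D"
    and hom: "graph_hom VM EM D (contr_edges E D) f" and "inj_on f VM"
  shows "card EM \<le> card E"
proof -
  have fD: "f ` VM \<subseteq> D" using hom unfolding graph_hom_def by blast
  define witness where "witness e p \<longleftrightarrow> p \<in> E \<and>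
      (\<exists>x y s t. e = {x, y} \<and> x \<in> VM \<and> y \<in> VM \<and> s \<in> f x \<and> t \<in> f y \<and> p = {s, t})" for e p
  have "\<forall>e\<in>EM. \<exists>p. witness e p"
  proof
    fix e assume e: "e \<in> EM"
    obtain x y where xy: "e = {x, y}" "x \<in> VM" "y \<in> VM"
      using simple_graph_edgeE[OF assms(2) e] by blast
    then have "connected_to E (f x) (f y)"
      using graph_hom_contr_edges_connected_to[OF hom] e by simp
    then show "\<exists>p. witness e p" using xy unfolding connected_to_def witness_def by blast
  qed
  then obtain w where w: "\<forall>e\<in>EM. witness e (w e)"
    by (rule bchoice[THEN exE])
  have recover: "e = {u \<in> VM. f u \<inter> w e \<noteq> {}}" if e: "e \<in> EM" for e
  proof -
    have "witness e (w e)" using w e by blast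
    then obtain x y s t where xyst: "e = {x, y}" "x \<in> VM" "y \<in> VM" "s \<in> f x" "t \<in> f y" "w e = {s, t}"
      unfolding witness_def by auto
    have "u = x \<or> u = y" if "u \<in> VM" "f u \<inter> w e \<noteq> {}" for u
    proof -
      have "s \<in> f u \<or> t \<in> f u" using that(2) xyst(6) by auto
      then show ?thesis
        using branch_sets_member_unique[OF assms(3) fD assms(5)] xyst(2-5) that(1) by metis
    qed
    then show ?thesis using xyst by auto
  qed
  have "inj_on w EM"
  proof (rule inj_onI)
    fix e e' assume "e \<in> EM" "e' \<in> EM" "w e = w e'"
    have "e = {u \<in> VM. f u \<inter> w e \<noteq> {}}" using recover[OF \<open>e \<in> EM\<close>] .
    also have "\<dots> = {u \<in> VM. f u \<inter> w e' \<noteq> {}}" by (simp only: \<open>w e = w e'\<close>)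
    also have "\<dots> = e'" using recover[OF \<open>e' \<in> EM\<close>, symmetric] .
    finally show "e = e'" .
  qed
  moreover have "w ` EM \<subseteq> E" using w unfolding witness_def by blast
  ultimately show ?thesis using card_inj_on_le assms(1) by blast
qed

lemma graph_iso_if_bij_hom_card_eq:
  assumes "simple_graph VM EM" "finite E" "bij_betw h VM V"
    and hom: "\<And>x y. {x, y} \<in> EM \<Longrightarrow> {h x, h y} \<in> E" and "card EM = card E"
  shows "graph_iso VM EM V E"
proof -
  have inj_h: "inj_on h VM" using assms(3) unfolding bij_betw_def by blast
  have edges_into: "image h ` EM \<subseteq> E"
  proof
    fix p assume "p \<in> image h ` EM"
    then obtain e where "e \<in> EM" "p = h ` e" by blast
    moreover obtain x y where "e = {x, y}"
      using simple_graph_edgeE[OF assms(1) \<open>e \<in> EM\<close>] by blast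
    ultimately show "p \<in> E" using hom by simp
  qed
  have inj_edges: "inj_on (image h) EM"
    using inj_on_subset[OF inj_on_image_Pow[OF inj_h] simple_graph_edges_subset_Pow[OF assms(1)]] .
  have "card (image h ` EM) = card E"
    using card_image[OF inj_edges] assms(5) by simp
  then have edges_onto: "image h ` EM = E"
    by (rule card_subset_eq[OF assms(2) edges_into])
  have "{x, y} \<in> EM" if "x \<in> VM" "y \<in> VM" "{h x, h y} \<in> E" for x y
  proof -
    have "h ` {x, y} \<in> image h ` EM"
      using edges_onto \<open>{h x, h y} \<in> E\<close> by simp
    then obtain e where e: "h ` {x, y} = h ` e" "e \<in> EM" by (rule imageE)
    have "e \<subseteq> VM" using simple_graph_edges_subset_Pow[OF assms(1)] e(2) by auto
    moreover have "{x, y} \<subseteq> VM" using that(1,2) by simp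
    ultimately have "e = {x, y}" using inj_on_image_eq_iff[OF inj_h] e(1) by metis
    then show ?thesis using e(2) by simp
  qed
  then show ?thesis
    unfolding graph_iso_def using assms(3) hom by blast
qed

text \<open>With as many vertices as the host graph, every branch set is a singleton.\<close>

lemma minor_spanning_if_card_eq:
  assumes "finite V" "simple_graph VM EM" "branch_sets V E D"
    and hom: "graph_hom VM EM D (contr_edges E D) f" and "inj_on f VM" and "card VM = card V"
  obtains h where "bij_betw h VM V" "\<And>x y. {x, y} \<in> EM \<Longrightarrow> {h x, h y} \<in> E"
proof -
  have fD: "f ` VM \<subseteq> D" using hom unfolding graph_hom_def by blast
  obtain h where h: "inj_on h VM" "h ` VM \<subseteq> V" "\<And>v. v \<in> VM \<Longrightarrow> h v \<in> f v"
    using branch_set_representatives[OF assms(3) fD assms(5)] by blast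
  have h_onto: "h ` VM = V"
    using card_subset_eq[OF assms(1) h(2)] card_image[OF h(1)] assms(6) by simp
  have singleton: "f v = {h v}" if v: "v \<in> VM" for v
  proof
    show "f v \<subseteq> {h v}"
    proof
      fix z assume z: "z \<in> f v"
      then have "z \<in> V" using branch_setsD[OF assms(3)] fD v by blast
      then obtain u where "u \<in> VM" "z = h u" using h_onto by blast
      then have "u = v" using branch_sets_member_unique[OF assms(3) fD assms(5)] h(3) z v by blast
      then show "z \<in> {h v}" using \<open>z = h u\<close> by simp
    qed
    show "{h v} \<subseteq> f v" using h(3) v by blast
  qed
  have "{h x, h y} \<in> E" if xy: "{x, y} \<in> EM" for x y
  proof -
    have "x \<in> VM" "y \<in> VM" using simple_graph_edgeD[OF assms(2) xy] by auto
    moreover have "connected_to E (f x) (f y)"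
      using graph_hom_contr_edges_connected_to[OF hom xy] .
    ultimately show ?thesis using singleton unfolding connected_to_def by simp
  qed
  moreover have "bij_betw h VM V"
    using h(1) h_onto unfolding bij_betw_def by simp
  ultimately show ?thesis using that by blast
qed

lemma proper_minor_smaller:
  assumes "finite_graph V E" "simple_graph VM EM" "is_minor VM EM V E" "\<not> graph_iso VM EM V E"
  shows "finite_graph VM EM" "card VM + card EM < card V + card E"
proof -
  obtain D f where bs: "branch_sets V E D" and hom: "graph_hom VM EM D (contr_edges E D) f"
    and inj: "inj_on f VM"
    using assms(3) unfolding is_minor_def by blast
  have "finite V" using assms(1) unfolding finite_graph_def by blast
  have "finite E" using finite_graph_finite_edges[OF assms(1)] .
  have "f ` VM \<subseteq> D" using hom unfolding graph_hom_def by blast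
  then obtain h where h: "inj_on h VM" "h ` VM \<subseteq> V"
    using branch_set_representatives[OF bs _ inj] by metis
  show "finite_graph VM EM"
    using inj_on_finite[OF h \<open>finite V\<close>] assms(2) unfolding finite_graph_def by blast
  have "card VM \<le> card V" using card_inj_on_le[OF h \<open>finite V\<close>] .
  moreover have "card EM \<le> card E"
    using minor_card_edges_le[OF \<open>finite E\<close> assms(2) bs hom inj] .
  moreover have "\<not> (card VM = card V \<and> card EM = card E)"
    using minor_spanning_if_card_eq[OF \<open>finite V\<close> assms(2) bs hom inj]
      graph_iso_if_bij_hom_card_eq[OF assms(2) \<open>finite E\<close>] assms(4) by metis
  ultimately show "card VM + card EM < card V + card E" by linarith
qed

lemma proper_minor_of_K_chromatic_minor:
  assumes "finite_graph V E" "\<not> complete_graph V E"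
    and "is_minor (K_verts (chromatic_number V E)) (K_edges (chromatic_number V E)) V E"
  shows "\<exists>(VM :: nat set) EM. simple_graph VM EM \<and> is_minor VM EM V E \<and> \<not> graph_iso VM EM V E \<and>
    (\<exists>f. graph_hom V E VM EM f)"
proof -
  have "card (K_verts (chromatic_number V E)) \<noteq> card V"
    using chromatic_number_less_card[OF assms(1,2)] by (simp add: K_verts_def)
  then have "\<not> graph_iso (K_verts (chromatic_number V E)) (K_edges (chromatic_number V E)) V E"
    using graph_iso_card_eq by blast
  then show ?thesis
    using simple_graph_K assms(3) ex_hom_K_chromatic_number[OF assms(1)] by blast
qed

lemma K_chromatic_minor_by_proper_minors:
  assumes proper: "\<And>V E. finite_graph (V :: 'a set) E \<Longrightarrow> \<not> complete_graph V E \<Longrightarrow>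
      \<exists>(VM :: 'a set) EM. simple_graph VM EM \<and> is_minor VM EM V E \<and> \<not> graph_iso VM EM V E \<and>
        (\<exists>f. graph_hom V E VM EM f)"
    and "finite_graph (V :: 'a set) E"
  shows "is_minor (K_verts (chromatic_number V E)) (K_edges (chromatic_number V E)) V E"
  using assms(2)
proof (induction "card V + card E" arbitrary: V E rule: less_induct)
  case less
  show ?case
  proof (cases "complete_graph V E")
    case True
    have "finite V" using less.prems unfolding finite_graph_def by blast
    then show ?thesis
      using complete_graph_K_card_minor True chromatic_number_le_card[OF less.prems]
        is_minor_K_mono by blast
  next
    case False
    then obtain VM :: "'a set" and EM f where M: "simple_graph VM EM" "is_minor VM EM V E"
      "\<not> graph_iso VM EM V E" "graph_hom V E VM EM f"
      using proper[OF less.prems] by blast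
    note smaller = proper_minor_smaller[OF less.prems M(1-3)]
    have "is_minor (K_verts (chromatic_number VM EM)) (K_edges (chromatic_number VM EM)) V E"
      using less.hyps[OF smaller(2) smaller(1)] M(2) by (rule is_minor_trans)
    moreover have "chromatic_number V E \<le> chromatic_number VM EM"
      using chromatic_number_mono_hom[OF smaller(1) M(4)] .
    ultimately show ?thesis using is_minor_K_mono by blast
  qed
qed

theorem mainTheorem2:
  shows "(\<forall>(V :: nat set) E. finite_graph V E \<longrightarrow>
            is_minor (K_verts (chromatic_number V E)) (K_edges (chromatic_number V E)) V E)
     \<longleftrightarrow>
         (\<forall>(V :: nat set) E. finite_graph V E \<and> \<not> complete_graph V E \<longrightarrow>
            (\<exists>(VM :: nat set) EM. simple_graph VM EM \<and> is_minor VM EM V E \<and>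
                \<not> graph_iso VM EM V E \<and> (\<exists>f. graph_hom V E VM EM f)))"
  using proper_minor_of_K_chromatic_minor K_chromatic_minor_by_proper_minors by meson

end
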